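(* Let $V$ be of class $\mathcal{C}^2$ and let $z$ be a nondegenerate stationary point of $V$, i.e. $\nabla V(z)=0$ and $\det(\nabla^2V(z))\neq0$. Then $z$ is a saddle if and only if $\nabla^2V(z)$ has exactly one strictly negative eigenvalue.
   Context: $V:\mathbb{R}^d\to\mathbb{R}$ is a continuous potential, bounded below, with exponentially tight level sets. Communication height: $\overline V(x,y)=\inf_{\gamma}\sup_{t\in[0,1]}V(\gamma(t))$, the infimum over continuous paths $\gamma:[0,1]\to\mathbb{R}^d$ from $x$ to $y$. Closed valley $\mathcal{C}(x)=\{y:\overline V(y,x)=V(x)\}$, open valley $\mathcal{O}(x)=\{y\in\mathcal{C}(x):V(y)<V(x)\}$; $\mathcal{B}_\eta(x)$ is the open ball of radius $\eta$ about $x$. A point $z$ is a saddle if there is $\eta>0$ such that (i) $\mathcal{O}(z)\cap\mathcal{B}_\eta(z)$ is non-empty and not path-connected, and (ii) $(\mathcal{O}(z)\cup\{z\})\cap\mathcal{B}_\eta(z)$ is path-connected. *)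

theory Defs
  imports "HOL-Analysis.Analysis" "HOL-Computational_Algebra.Polynomial"
begin

text \<open>Standing assumptions on the potential: bounded below, and exponentially tight
  (i.e. compact) sublevel sets. Continuity follows from the C2 assumption.\<close>
definition tight_levels :: "('a::topological_space \<Rightarrow> real) \<Rightarrow> bool" where
  "tight_levels V \<longleftrightarrow> (\<forall>c. compact {x. V x \<le> c})"

definition C2_with :: "(real^'n \<Rightarrow> real) \<Rightarrow> (real^'n \<Rightarrow> real^'n) \<Rightarrow> (real^'n \<Rightarrow> real^'n^'n) \<Rightarrow> bool" where
  "C2_with V g H \<longleftrightarrow>
     (\<forall>x. (V has_derivative (\<lambda>h. g x \<bullet> h)) (at x)) \<and>
     (\<forall>x. (g has_derivative (\<lambda>h. H x *v h)) (at x)) \<and>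
     continuous_on UNIV H"

definition comm_height :: "('a::real_normed_vector \<Rightarrow> real) \<Rightarrow> 'a \<Rightarrow> 'a \<Rightarrow> real" where
  "comm_height V x y =
     (INF \<gamma>\<in>{\<gamma>. path \<gamma> \<and> pathstart \<gamma> = x \<and> pathfinish \<gamma> = y}. SUP t\<in>{0..1}. V (\<gamma> t))"

definition closed_valley :: "('a::real_normed_vector \<Rightarrow> real) \<Rightarrow> 'a \<Rightarrow> 'a set" where
  "closed_valley V x = {y. comm_height V y x = V x}"

definition open_valley :: "('a::real_normed_vector \<Rightarrow> real) \<Rightarrow> 'a \<Rightarrow> 'a set" where
  "open_valley V x = {y \<in> closed_valley V x. V y < V x}"

definition is_saddle :: "('a::real_normed_vector \<Rightarrow> real) \<Rightarrow> 'a \<Rightarrow> bool" where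
  "is_saddle V z \<longleftrightarrow> (\<exists>\<eta>>0.
     open_valley V z \<inter> ball z \<eta> \<noteq> {} \<and>
     \<not> path_connected (open_valley V z \<inter> ball z \<eta>) \<and>
     path_connected ((open_valley V z \<union> {z}) \<inter> ball z \<eta>))"

definition charpoly :: "real^'n^'n \<Rightarrow> real poly" where
  "charpoly A = det (\<chi> i j. (if i = j then [:0, 1:] else 0) - [:A $ i $ j:])"

definition num_neg_eigenvalues :: "real^'n^'n \<Rightarrow> nat" where
  "num_neg_eigenvalues A =
     (\<Sum>\<mu>\<in>{\<mu>. \<mu> < 0 \<and> poly (charpoly A) \<mu> = 0}. order \<mu> (charpoly A))"

end

theory Submission
  imports Defs
begin

text \<open>
  The Hessian at \<open>z\<close> is symmetric, so \<open>\<real>\<^sup>n\<close> splits orthogonally into the span \<open>E\<close>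
  of the eigenvectors with negative eigenvalues and its orthogonal complement, and \<open>dim E\<close> is the
  number of negative eigenvalues. By continuity the Hessian stays negative definite on \<open>E\<close> and
  positive definite on \<open>E\<^sup>\<bottom>\<close> in a small ball around \<open>z\<close>. There \<open>V\<close> decreases along
  \<open>E\<close> and is convex along \<open>E\<^sup>\<bottom>\<close>, so every point of the ball below level \<open>V z\<close> is joined,
  first by a segment parallel to \<open>E\<^sup>\<bottom>\<close> and then radially, to \<open>z\<close> without exceeding \<open>V z\<close>.
  Hence near \<open>z\<close> the open valley is just the sublevel set \<open>{V < V z}\<close> of the ball. For
  \<open>dim E = 0\<close> this set is empty, for \<open>dim E \<ge> 2\<close> it is path connected (it retracts onto a
  punctured disc of dimension at least two), and either way \<open>z\<close> is not a saddle; for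
  \<open>dim E = 1\<close> the hyperplane \<open>z + E\<^sup>\<bottom>\<close> cuts it into two pieces that \<open>z\<close> reconnects.
\<close>

section \<open>Calculus along lines\<close>

lemma has_real_derivative_along_line:
  fixes V :: "'a::real_inner \<Rightarrow> real"
  assumes "\<And>x. (V has_derivative (\<lambda>h. g x \<bullet> h)) (at x)"
  shows "((\<lambda>t. V (p + t *\<^sub>R w)) has_real_derivative g (p + t *\<^sub>R w) \<bullet> w) (at t)"
proof -
  have "((\<lambda>t. V (p + t *\<^sub>R w)) has_derivative (\<lambda>s. g (p + t *\<^sub>R w) \<bullet> (s *\<^sub>R w))) (at t)"
    by (rule has_derivative_compose[of "\<lambda>t. p + t *\<^sub>R w" _ _ _ V])
      (auto intro!: derivative_eq_intros assms)
  then show ?thesis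
    by (simp add: has_field_derivative_def mult_commute_abs)
qed

lemma has_real_derivative_gradient_along_line:
  fixes g :: "real^'n \<Rightarrow> real^'n"
  assumes "\<And>x. (g has_derivative (\<lambda>h. H x *v h)) (at x)"
  shows "((\<lambda>t. g (p + t *\<^sub>R w) \<bullet> w) has_real_derivative (H (p + t *\<^sub>R w) *v w) \<bullet> w) (at t)"
proof -
  have "((\<lambda>t. g (p + t *\<^sub>R w)) has_derivative (\<lambda>s. H (p + t *\<^sub>R w) *v (s *\<^sub>R w))) (at t)"
    by (rule has_derivative_compose[of "\<lambda>t. p + t *\<^sub>R w" _ _ _ g])
      (auto intro!: derivative_eq_intros assms)
  then have "((\<lambda>t. g (p + t *\<^sub>R w) \<bullet> w) has_derivative (\<lambda>s. (H (p + t *\<^sub>R w) *v (s *\<^sub>R w)) \<bullet> w)) (at t)"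
    by (auto intro!: derivative_eq_intros)
  then show ?thesis
    by (simp add: has_field_derivative_def matrix_vector_mult_scaleR mult_commute_abs)
qed

lemma less_if_second_derivative_pos:
  fixes f :: "real \<Rightarrow> real"
  assumes f': "\<And>t. (f has_real_derivative f' t) (at t)"
    and f'': "\<And>t. (f' has_real_derivative f'' t) (at t)"
    and "f' 0 = 0" and pos: "\<And>t. 0 < t \<Longrightarrow> t < 1 \<Longrightarrow> f'' t > 0"
  shows "f 0 < f 1"
proof -
  obtain \<xi> where \<xi>: "0 < \<xi>" "\<xi> < 1" and f1: "f 1 - f 0 = f' \<xi>"
    using MVT2[of 0 1 f f'] f' by auto
  obtain \<zeta> where \<zeta>: "0 < \<zeta>" "\<zeta> < \<xi>" and "f' \<xi> - f' 0 = \<xi> * f'' \<zeta>"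
    using MVT2[of 0 \<xi> f' f''] f'' \<xi> by auto
  moreover have "\<xi> * f'' \<zeta> > 0"
    using \<xi> \<zeta> pos[of \<zeta>] by simp
  ultimately show ?thesis
    using f1 \<open>f' 0 = 0\<close> by simp
qed

section \<open>Symmetry of the Hessian\<close>

lemma second_difference_mean_value:
  fixes V :: "'a::real_inner \<Rightarrow> real"
  assumes V: "\<And>x. (V has_derivative (\<lambda>h. g x \<bullet> h)) (at x)" and "s > 0"
  obtains \<rho> where "0 < \<rho>" "\<rho> < s"
    "V (z + s *\<^sub>R (h + k)) - V (z + s *\<^sub>R h) - V (z + s *\<^sub>R k) + V z
       = s * ((g (z + s *\<^sub>R k + \<rho> *\<^sub>R h) - g (z + \<rho> *\<^sub>R h)) \<bullet> h)"
proof -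
  define G where "G r = V ((z + s *\<^sub>R k) + r *\<^sub>R h) - V (z + r *\<^sub>R h)" for r
  have "(G has_real_derivative (g (z + s *\<^sub>R k + r *\<^sub>R h) - g (z + r *\<^sub>R h)) \<bullet> h) (at r)" for r
    unfolding G_def inner_diff_left
    by (intro DERIV_diff has_real_derivative_along_line V)
  then obtain \<rho> where "0 < \<rho>" "\<rho> < s"
    "G s - G 0 = s * ((g (z + s *\<^sub>R k + \<rho> *\<^sub>R h) - g (z + \<rho> *\<^sub>R h)) \<bullet> h)"
    using MVT2[of 0 s G] \<open>s > 0\<close> by force
  moreover have "G s - G 0 = V (z + s *\<^sub>R (h + k)) - V (z + s *\<^sub>R h) - V (z + s *\<^sub>R k) + V z"
    by (simp add: G_def algebra_simps)
  ultimately show ?thesis using that by simp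
qed

lemma has_derivative_increment_bound:
  assumes gL: "(g has_derivative L) (at z)" and "e > 0"
  obtains d where "d > 0" "\<And>x y. norm (x - z) < d \<Longrightarrow> norm (y - z) < d \<Longrightarrow>
    norm (g x - g y - L (x - y)) \<le> e * (norm (x - z) + norm (y - z))"
proof -
  have L: "linear L"
    using gL by (simp add: has_derivative_linear)
  have "\<exists>d>0. \<forall>y. norm (y - z) < d \<longrightarrow> norm (g y - g z - L (y - z)) \<le> e * norm (y - z)"
    using gL \<open>e > 0\<close> by (simp add: has_derivative_at_alt)
  then obtain d where "d > 0"
    and d: "\<And>y. norm (y - z) < d \<Longrightarrow> norm (g y - g z - L (y - z)) \<le> e * norm (y - z)"
    by blast
  have "norm (g x - g y - L (x - y)) \<le> e * (norm (x - z) + norm (y - z))"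
    if "norm (x - z) < d" "norm (y - z) < d" for x y
  proof -
    have "g x - g y - L (x - y) = (g x - g z - L (x - z)) - (g y - g z - L (y - z))"
      by (simp add: linear_diff[OF L])
    then have "norm (g x - g y - L (x - y))
        \<le> norm (g x - g z - L (x - z)) + norm (g y - g z - L (y - z))"
      by (metis norm_triangle_ineq4)
    also have "\<dots> \<le> e * norm (x - z) + e * norm (y - z)"
      using d[OF that(1)] d[OF that(2)] by (rule add_mono)
    finally show ?thesis
      by (simp add: distrib_left)
  qed
  with \<open>d > 0\<close> show ?thesis
    using that by blast
qed

lemma second_difference_approx:
  fixes V :: "'a::real_inner \<Rightarrow> real"
  assumes V: "\<And>x. (V has_derivative (\<lambda>h. g x \<bullet> h)) (at x)"
    and gL: "(g has_derivative L) (at z)" and e: "e > 0"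
  obtains d where "d > 0" "\<And>s. 0 < s \<Longrightarrow> s < d \<Longrightarrow>
     \<bar>V (z + s *\<^sub>R (h + k)) - V (z + s *\<^sub>R h) - V (z + s *\<^sub>R k) + V z - s\<^sup>2 * (L k \<bullet> h)\<bar>
       \<le> 2 * e * s\<^sup>2 * (norm h + norm k)\<^sup>2"
proof -
  obtain d where "d > 0" and d: "\<And>x y. norm (x - z) < d \<Longrightarrow> norm (y - z) < d \<Longrightarrow>
      norm (g x - g y - L (x - y)) \<le> e * (norm (x - z) + norm (y - z))"
    using has_derivative_increment_bound[OF gL e] by blast
  define c where "c = norm h + norm k + 1"
  have "c > 0" by (simp add: c_def add_nonneg_pos)
  show ?thesis
  proof (rule that)
    show "d / c > 0" using \<open>d > 0\<close> \<open>c > 0\<close> by simp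
    fix s assume "0 < s" "s < d / c"
    then have "s * (norm h + norm k) < d"
      using \<open>c > 0\<close> mult_left_mono[of "norm h + norm k" c s] by (simp add: c_def field_simps)
    obtain \<rho> where \<rho>: "0 < \<rho>" "\<rho> < s" and mv:
      "V (z + s *\<^sub>R (h + k)) - V (z + s *\<^sub>R h) - V (z + s *\<^sub>R k) + V z
         = s * ((g (z + s *\<^sub>R k + \<rho> *\<^sub>R h) - g (z + \<rho> *\<^sub>R h)) \<bullet> h)"
      using second_difference_mean_value[OF V \<open>0 < s\<close>] by blast
    let ?x = "z + s *\<^sub>R k + \<rho> *\<^sub>R h" and ?y = "z + \<rho> *\<^sub>R h"
    have x: "norm (?x - z) \<le> s * (norm h + norm k)" and y: "norm (?y - z) \<le> s * (norm h + norm k)"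
      using norm_triangle_ineq[of "s *\<^sub>R k" "\<rho> *\<^sub>R h"] \<rho> mult_right_mono[of \<rho> s "norm h"]
      by (simp_all add: distrib_left add.assoc add_increasing2)
    then have "norm (g ?x - g ?y - L (?x - ?y)) \<le> e * (norm (?x - z) + norm (?y - z))"
      using \<open>s * (norm h + norm k) < d\<close> by (intro d) auto
    also have "\<dots> \<le> e * (2 * (s * (norm h + norm k)))"
      using x y e by (intro mult_left_mono) auto
    finally have err: "norm (g ?x - g ?y - L (?x - ?y)) \<le> 2 * e * s * (norm h + norm k)"
      by (simp add: mult_ac)
    have "V (z + s *\<^sub>R (h + k)) - V (z + s *\<^sub>R h) - V (z + s *\<^sub>R k) + V z - s\<^sup>2 * (L k \<bullet> h)
        = s * ((g ?x - g ?y - L (?x - ?y)) \<bullet> h)"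
      using linear_scale[OF has_derivative_linear[OF gL]]
      by (simp add: mv inner_diff_left power2_eq_square right_diff_distrib)
    also have "\<bar>\<dots>\<bar> \<le> s * (2 * e * s * (norm h + norm k) * norm h)"
    proof -
      have "\<bar>(g ?x - g ?y - L (?x - ?y)) \<bullet> h\<bar> \<le> 2 * e * s * (norm h + norm k) * norm h"
        using Cauchy_Schwarz_ineq2[of "g ?x - g ?y - L (?x - ?y)" h]
          mult_right_mono[OF err norm_ge_zero[of h]] by linarith
      then show ?thesis
        using \<open>0 < s\<close> by (simp add: abs_mult)
    qed
    also have "\<dots> \<le> 2 * e * s\<^sup>2 * (norm h + norm k)\<^sup>2"
      using \<open>0 < s\<close> e by (simp add: power2_eq_square mult_left_mono)
    finally show "\<bar>V (z + s *\<^sub>R (h + k)) - V (z + s *\<^sub>R h) - V (z + s *\<^sub>R k) + V z - s\<^sup>2 * (L k \<bullet> h)\<bar>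
       \<le> 2 * e * s\<^sup>2 * (norm h + norm k)\<^sup>2" .
  qed
qed

lemma derivative_of_gradient_symmetric:
  fixes V :: "'a::real_inner \<Rightarrow> real"
  assumes V: "\<And>x. (V has_derivative (\<lambda>h. g x \<bullet> h)) (at x)"
    and gL: "(g has_derivative L) (at z)"
  shows "L k \<bullet> h = L h \<bullet> k"
proof -
  define D where "D a b s = V (z + s *\<^sub>R (a + b)) - V (z + s *\<^sub>R a) - V (z + s *\<^sub>R b) + V z" for a b s
  define C where "C = (norm h + norm k)\<^sup>2"
  have D_sym: "D k h s = D h k s" for s
    by (simp add: D_def add.commute)
  have bound: "\<bar>L k \<bullet> h - L h \<bullet> k\<bar> \<le> 4 * e * C" if "e > 0" for e
  proof -
    obtain d1 where "d1 > 0" and d1: "\<And>s. 0 < s \<Longrightarrow> s < d1 \<Longrightarrow> \<bar>D h k s - s\<^sup>2 * (L k \<bullet> h)\<bar> \<le> 2 * e * s\<^sup>2 * C"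
      using second_difference_approx[OF V gL \<open>e > 0\<close>, of h k] unfolding D_def C_def by blast
    obtain d2 where "d2 > 0" and d2: "\<And>s. 0 < s \<Longrightarrow> s < d2 \<Longrightarrow> \<bar>D k h s - s\<^sup>2 * (L h \<bullet> k)\<bar> \<le> 2 * e * s\<^sup>2 * C"
      using second_difference_approx[OF V gL \<open>e > 0\<close>, of k h]
      unfolding D_def C_def add.commute[of "norm k"] by blast
    define s where "s = min d1 d2 / 2"
    have s: "0 < s" "s < d1" "s < d2"
      using \<open>d1 > 0\<close> \<open>d2 > 0\<close> by (auto simp: s_def)
    have "s\<^sup>2 * \<bar>L k \<bullet> h - L h \<bullet> k\<bar> = \<bar>(D h k s - s\<^sup>2 * (L h \<bullet> k)) - (D h k s - s\<^sup>2 * (L k \<bullet> h))\<bar>"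
      by (simp add: abs_mult flip: right_diff_distrib)
    also have "\<dots> \<le> s\<^sup>2 * (4 * e * C)"
      using d1[OF s(1,2)] d2[OF s(1,3)] unfolding D_sym by (simp add: abs_le_iff algebra_simps)
    finally show ?thesis
      using \<open>0 < s\<close> by simp
  qed
  have "C \<ge> 0" by (simp add: C_def)
  have "\<bar>L k \<bullet> h - L h \<bullet> k\<bar> \<le> 0 + e" if "e > 0" for e
  proof -
    have "\<bar>L k \<bullet> h - L h \<bullet> k\<bar> \<le> 4 * (e / (4 * (C + 1))) * C"
      using bound[of "e / (4 * (C + 1))"] that \<open>C \<ge> 0\<close> by simp
    also have "\<dots> = e * (C / (C + 1))"
      using \<open>C \<ge> 0\<close> by (simp add: field_simps)
    also have "\<dots> \<le> e"
      using that \<open>C \<ge> 0\<close> mult_left_mono[of "C / (C + 1)" 1 e] by simp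
    finally show ?thesis by simp
  qed
  then show ?thesis
    using field_le_epsilon[of "\<bar>L k \<bullet> h - L h \<bullet> k\<bar>" 0] by simp
qed

section \<open>Spectral theorem for symmetric matrices\<close>

lemma eq_0_if_quadratic_nonpos:
  fixes a c :: real
  assumes "\<And>t. 2 * t * a + t\<^sup>2 * c \<le> 0"
  shows "a = 0"
proof (rule ccontr)
  assume "a \<noteq> 0"
  define t where "t = a / (\<bar>c\<bar> + 1)"
  have a: "a = t * (\<bar>c\<bar> + 1)"
    by (simp add: t_def add_nonneg_pos)
  with \<open>a \<noteq> 0\<close> have "t \<noteq> 0" by auto
  have "0 < t\<^sup>2 * (\<bar>c\<bar> + 2)"
    using \<open>t \<noteq> 0\<close> by simp
  also have "\<dots> = 2 * t * a - t\<^sup>2 * \<bar>c\<bar>"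
    by (simp add: a power2_eq_square algebra_simps)
  also have "\<dots> \<le> 2 * t * a + t\<^sup>2 * c"
    using mult_left_mono[OF abs_ge_minus_self[of c], of "t\<^sup>2"] by simp
  finally show False
    using assms[of t] by linarith
qed

lemma self_adjoint_eigenvector_if_Rayleigh_max:
  fixes f :: "'a::real_inner \<Rightarrow> 'a"
  assumes f: "linear f" and sa: "\<And>x y. f x \<bullet> y = x \<bullet> f y"
    and S: "subspace S" "f ` S \<subseteq> S" and "v \<in> S" "norm v = 1"
    and max: "\<And>y. y \<in> S \<Longrightarrow> y \<bullet> f y \<le> (v \<bullet> f v) * (norm y)\<^sup>2"
  shows "f v = (v \<bullet> f v) *\<^sub>R v"
proof -
  define l where "l = v \<bullet> f v"
  have vv: "v \<bullet> v = 1"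
    using \<open>norm v = 1\<close> by (simp add: dot_square_norm)
  \<comment> \<open>Perturbing \<open>v\<close> within \<open>S\<close> shows that \<open>f v - l v\<close> is orthogonal to \<open>S\<close>.\<close>
  have orth: "(f v - l *\<^sub>R v) \<bullet> w = 0" if "w \<in> S" for w
  proof -
    have "2 * t * (w \<bullet> f v - l * (v \<bullet> w)) + t\<^sup>2 * (w \<bullet> f w - l * (norm w)\<^sup>2) \<le> 0" for t
    proof -
      have "(v + t *\<^sub>R w) \<bullet> f (v + t *\<^sub>R w) = l + 2 * t * (w \<bullet> f v) + t\<^sup>2 * (w \<bullet> f w)"
        using sa[of v w] sa[of w v]
        by (simp add: l_def linear_add[OF f] linear_scale[OF f] inner_add_left
            inner_add_right power2_eq_square algebra_simps inner_commute)
      moreover have "(norm (v + t *\<^sub>R w))\<^sup>2 = 1 + 2 * t * (v \<bullet> w) + t\<^sup>2 * (norm w)\<^sup>2"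
        unfolding power2_norm_eq_inner
        by (simp add: vv inner_add_left inner_add_right power2_eq_square algebra_simps inner_commute)
      moreover have "v + t *\<^sub>R w \<in> S"
        using \<open>v \<in> S\<close> that S(1) by (simp add: subspace_add subspace_scale)
      ultimately show ?thesis
        using max[of "v + t *\<^sub>R w"] by (simp add: l_def algebra_simps)
    qed
    then have "w \<bullet> f v - l * (v \<bullet> w) = 0"
      by (rule eq_0_if_quadratic_nonpos)
    then show ?thesis
      by (simp add: inner_diff_right inner_commute[of _ w])
  qed
  have "f v - l *\<^sub>R v \<in> S"
    using \<open>v \<in> S\<close> S by (auto intro: subspace_diff subspace_scale)
  then show ?thesis
    using orth by (fastforce simp: l_def)
qed

lemma self_adjoint_eigenvector_in_subspace:
  fixes f :: "'a::euclidean_space \<Rightarrow> 'a"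
  assumes f: "linear f" and sa: "\<And>x y. f x \<bullet> y = x \<bullet> f y"
    and S: "subspace S" "f ` S \<subseteq> S" and "x \<in> S" "x \<noteq> 0"
  obtains v l where "v \<in> S" "norm v = 1" "f v = l *\<^sub>R v"
proof -
  define q where "q y = y \<bullet> f y" for y
  define K where "K = sphere 0 1 \<inter> S"
  have "compact K"
    unfolding K_def using S(1) by (intro compact_Int_closed closed_subspace) auto
  moreover have "x /\<^sub>R norm x \<in> K"
    using \<open>x \<in> S\<close> \<open>x \<noteq> 0\<close> S(1) by (auto simp: K_def subspace_scale)
  moreover have "continuous_on K q"
    using linear_continuous_on[OF linear_conv_bounded_linear[THEN iffD1, OF f]]
    unfolding q_def by (intro continuous_intros) auto
  ultimately obtain v where "v \<in> K" and v_max: "\<And>y. y \<in> K \<Longrightarrow> q y \<le> q v"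
    using continuous_attains_sup[of K q] by blast
  then have "v \<in> S" "norm v = 1" by (auto simp: K_def)
  have "q y \<le> q v * (norm y)\<^sup>2" if "y \<in> S" for y
  proof (cases "y = 0")
    case True then show ?thesis by (simp add: q_def linear_0[OF f])
  next
    case False
    then have "y /\<^sub>R norm y \<in> K" using that S(1) by (auto simp: K_def subspace_scale)
    then have "(inverse (norm y))\<^sup>2 * q y \<le> q v"
      using v_max[of "y /\<^sub>R norm y"] by (simp add: q_def linear_scale[OF f] power2_eq_square)
    then show ?thesis using False by (simp add: field_simps power2_eq_square)
  qed
  then have "f v = (v \<bullet> f v) *\<^sub>R v"
    using self_adjoint_eigenvector_if_Rayleigh_max[OF f sa S \<open>v \<in> S\<close> \<open>norm v = 1\<close>]
    by (simp add: q_def)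
  with \<open>v \<in> S\<close> \<open>norm v = 1\<close> show ?thesis by (rule that)
qed

lemma self_adjoint_orthonormal_eigenbasis_subspace:
  fixes f :: "'a::euclidean_space \<Rightarrow> 'a"
  assumes f: "linear f" and sa: "\<And>x y. f x \<bullet> y = x \<bullet> f y"
  shows "subspace S \<Longrightarrow> f ` S \<subseteq> S \<Longrightarrow> \<exists>B. B \<subseteq> S \<and> pairwise orthogonal B \<and>
    (\<forall>b\<in>B. norm b = 1 \<and> (\<exists>l. f b = l *\<^sub>R b)) \<and> span B = S"
proof (induction "dim S" arbitrary: S rule: less_induct)
  case less
  show ?case
  proof (cases "S \<subseteq> {0}")
    case True
    then have "S = {0}" using less.prems subspace_0 by blast
    then show ?thesis by (intro exI[of _ "{}"]) auto
  next
    case False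
    then obtain x where "x \<in> S" "x \<noteq> 0" by blast
    then obtain v l where v: "v \<in> S" "norm v = 1" "f v = l *\<^sub>R v"
      using self_adjoint_eigenvector_in_subspace[OF f sa less.prems] by blast
    then have vv: "v \<bullet> v = 1" by (simp add: dot_square_norm)
    define S' where "S' = {y \<in> S. v \<bullet> y = 0}"
    have "subspace S'"
      using less.prems(1) by (auto simp: S'_def subspace_def inner_add_right)
    moreover have "f ` S' \<subseteq> S'"
      using less.prems v(3) by (auto simp: S'_def sa[symmetric])
    moreover have "dim S' < dim S"
    proof (rule dim_psubset)
      have "S' \<subset> S"
        using v(1) vv unfolding S'_def by force
      then show "span S' \<subset> span S"
        using \<open>subspace S'\<close> less.prems(1) by (simp add: span_eq_iff[THEN iffD2])
    qed
    ultimately obtain B where B: "B \<subseteq> S'" "pairwise orthogonal B"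
      "\<forall>b\<in>B. norm b = 1 \<and> (\<exists>l. f b = l *\<^sub>R b)" "span B = S'"
      using less.hyps by blast
    have "S \<subseteq> span (insert v B)"
    proof
      fix y assume "y \<in> S"
      then have "y - (v \<bullet> y) *\<^sub>R v \<in> S'"
        using v(1) vv less.prems(1) by (auto simp: S'_def subspace_diff subspace_scale inner_diff_right)
      then show "y \<in> span (insert v B)"
        using B(4) span_breakdown_eq by blast
    qed
    moreover have "span (insert v B) \<subseteq> S"
      using B(1) v(1) less.prems(1) by (intro span_minimal) (auto simp: S'_def)
    ultimately show ?thesis
      using B v(1,2,3) by (intro exI[of _ "insert v B"])
        (auto simp: S'_def pairwise_insert orthogonal_def inner_commute)
  qed
qed

lemma symmetric_matrix_orthonormal_eigenbasis:
  fixes A :: "real^'n^'n"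
  assumes sym: "\<And>x y. (A *v x) \<bullet> y = x \<bullet> (A *v y)"
  obtains b :: "'n \<Rightarrow> real^'n" and \<mu> :: "'n \<Rightarrow> real"
  where "\<And>i j. b i \<bullet> b j = (if i = j then 1 else 0)" "\<And>i. A *v b i = \<mu> i *\<^sub>R b i"
    "span (range b) = UNIV"
proof -
  obtain B where B: "pairwise orthogonal B" "\<forall>b\<in>B. norm b = 1 \<and> (\<exists>l. A *v b = l *\<^sub>R b)"
    "span B = UNIV"
    using self_adjoint_orthonormal_eigenbasis_subspace[OF matrix_vector_mul_linear sym, of UNIV]
    by auto
  have "independent B"
    using B(1,2) pairwise_orthogonal_independent by force
  then have "finite B" and "card B = CARD('n)"
    using B(3) dim_span_eq_card_independent[of B] by (auto simp: independent_bound)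
  then obtain b where b: "bij_betw b (UNIV :: 'n set) B"
    by (metis finite_same_card_bij finite_class.finite_UNIV)
  then have bB: "b i \<in> B" for i
    using bij_betwE by blast
  have "b i \<bullet> b j = (if i = j then 1 else 0)" for i j
  proof (cases "i = j")
    case True then show ?thesis using B(2) bB by (simp add: dot_square_norm)
  next
    case False
    then have "b i \<noteq> b j" using b by (metis bij_betw_imp_inj_on inj_on_def UNIV_I)
    then show ?thesis using B(1) bB False by (auto simp: pairwise_def orthogonal_def)
  qed
  moreover have "A *v b i = (SOME l. A *v b i = l *\<^sub>R b i) *\<^sub>R b i" for i
    using B(2) bB by (metis (mono_tags, lifting) someI_ex)
  moreover have "span (range b) = UNIV"
    using b B(3) by (simp add: bij_betw_def)
  ultimately show ?thesis by (rule that)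
qed

section \<open>Characteristic polynomial\<close>

lemma columns_transpose_mult_entry:
  fixes b :: "'n \<Rightarrow> real^'n" and M :: "real^'n^'n"
  defines "Q \<equiv> (\<chi> k j. b j $ k) :: real^'n^'n"
  shows "(transpose Q ** M ** Q) $ i $ j = b i \<bullet> (M *v b j)"
proof -
  have MQ: "(M ** Q) $ k $ j = (M *v b j) $ k" for k
    by (simp add: matrix_matrix_mult_def matrix_vector_mult_def Q_def)
  have "(transpose Q ** M ** Q) $ i $ j = (transpose Q ** (M ** Q)) $ i $ j"
    by (simp add: matrix_mul_assoc)
  also have "\<dots> = (\<Sum>k\<in>UNIV. Q $ k $ i * (M ** Q) $ k $ j)"
    by (simp add: matrix_matrix_mult_def transpose_def)
  also have "\<dots> = b i \<bullet> (M *v b j)"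
    by (simp add: MQ inner_vec_def) (simp add: Q_def)
  finally show ?thesis .
qed

lemma poly_det:
  fixes M :: "real poly^'n^'n"
  shows "poly (det M) x = det (\<chi> i j. poly (M $ i $ j) x)"
  unfolding det_def by (simp add: poly_sum poly_prod)

lemma charpoly_orthonormal_eigenbasis:
  fixes A :: "real^'n^'n" and b :: "'n \<Rightarrow> real^'n"
  assumes orth: "\<And>i j. b i \<bullet> b j = (if i = j then 1 else 0)"
    and eig: "\<And>i. A *v b i = \<mu> i *\<^sub>R b i"
  shows "charpoly A = (\<Prod>i\<in>UNIV. [:- \<mu> i, 1:])"
proof -
  \<comment> \<open>The orthogonal matrix \<open>Q\<close> with columns \<open>b j\<close> diagonalises \<open>x I - A\<close>.\<close>
  define Q :: "real^'n^'n" where "Q = (\<chi> k j. b j $ k)"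
  have ent: "(transpose Q ** M ** Q) $ i $ j = b i \<bullet> (M *v b j)" for M i j
    unfolding Q_def by (rule columns_transpose_mult_entry)
  have e1: "(transpose Q ** Q) $ i $ j = (if i = j then 1 else 0)" for i j
    using ent[of "mat 1" i j] orth[of i j] by simp
  have "transpose Q ** Q = mat 1"
    by (simp add: vec_eq_iff e1 mat_def)
  then have "det (transpose Q) * det Q = 1"
    by (metis det_mul det_I)
  then have dQ: "det Q * det Q = 1" by simp
  have mx: "mat x *v v = x *\<^sub>R v" for x and v :: "real^'n"
    by (simp add: vec_eq_iff matrix_vector_mult_def mat_def if_distrib[where f="\<lambda>a. a * _"] cong: if_cong)
  have dx: "det (mat x - A) = (\<Prod>i\<in>UNIV. x - \<mu> i)" for x
  proof -
    have "transpose Q ** (mat x - A) ** Q = (\<chi> i j. if i = j then x - \<mu> i else 0)"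
      by (simp add: vec_eq_iff ent matrix_vector_mult_diff_rdistrib eig orth inner_diff_right mx
          algebra_simps)
    then have "det (transpose Q ** (mat x - A) ** Q) = (\<Prod>i\<in>UNIV. x - \<mu> i)"
      by (simp add: det_diagonal)
    moreover have "det (transpose Q ** (mat x - A) ** Q) = det (mat x - A) * (det Q * det Q)"
      by (simp add: det_mul)
    ultimately show ?thesis using dQ by simp
  qed
  have "poly (charpoly A) x = poly (\<Prod>i\<in>UNIV. [:- \<mu> i, 1:]) x" for x
  proof -
    have "poly (charpoly A) x = det (mat x - A)"
      unfolding charpoly_def poly_det
      by (rule arg_cong[where f=det]) (simp add: vec_eq_iff mat_def)
    then show ?thesis by (simp add: dx poly_prod)
  qed
  then show ?thesis using poly_eq_poly_eq_iff by blast
qed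

lemma order_linear_monic: "order x [:- a, 1:] = (if a = x then 1 else 0)"
  using order_power_n_n[of x 1] order_0I[of "[:- a, 1:]" x] by auto

lemma order_prod:
  fixes f :: "'i \<Rightarrow> 'a::idom poly"
  assumes "finite I" "\<And>i. i \<in> I \<Longrightarrow> f i \<noteq> 0"
  shows "order x (\<Prod>i\<in>I. f i) = (\<Sum>i\<in>I. order x (f i))"
  using assms by (induction I rule: finite_induct) (auto simp: order_0I order_mult)

lemma num_neg_eigenvalues_orthonormal_eigenbasis:
  fixes A :: "real^'n^'n" and b :: "'n \<Rightarrow> real^'n"
  assumes orth: "\<And>i j. b i \<bullet> b j = (if i = j then 1 else 0)"
    and eig: "\<And>i. A *v b i = \<mu> i *\<^sub>R b i"
  shows "num_neg_eigenvalues A = card {i. \<mu> i < 0}"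
proof -
  have cp: "charpoly A = (\<Prod>i\<in>UNIV. [:- \<mu> i, 1:])"
    by (rule charpoly_orthonormal_eigenbasis[OF orth eig])
  have "order x (charpoly A) = card {i. \<mu> i = x}" for x
    by (simp add: cp order_prod order_linear_monic sum.If_cases)
  moreover have "{x. x < 0 \<and> poly (charpoly A) x = 0} = \<mu> ` {i. \<mu> i < 0}"
    by (auto simp: cp poly_prod)
  ultimately have "num_neg_eigenvalues A = (\<Sum>x\<in>\<mu> ` {i. \<mu> i < 0}. card {i. \<mu> i = x})"
    by (simp add: num_neg_eigenvalues_def)
  also have "\<dots> = card (\<Union>x\<in>\<mu> ` {i. \<mu> i < 0}. {i. \<mu> i = x})"
    by (rule card_UN_disjoint[symmetric]) auto
  also have "(\<Union>x\<in>\<mu> ` {i. \<mu> i < 0}. {i. \<mu> i = x}) = {i. \<mu> i < 0}"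
    by auto
  finally show ?thesis .
qed

section \<open>Quadratic forms\<close>

lemma orthonormal_basis_expansion:
  fixes b :: "'i::finite \<Rightarrow> 'a::real_inner"
  assumes orth: "\<And>i j. b i \<bullet> b j = (if i = j then 1 else 0)" and "span (range b) = UNIV"
  shows "x = (\<Sum>i\<in>UNIV. (x \<bullet> b i) *\<^sub>R b i)"
proof -
  define y where "y = x - (\<Sum>i\<in>UNIV. (x \<bullet> b i) *\<^sub>R b i)"
  have "orthogonal y (b j)" for j
    by (simp add: y_def orthogonal_def inner_diff_left inner_sum_left orth
        if_distrib[where f="\<lambda>a. _ * a"] cong: if_cong)
  then have "orthogonal y y"
    using orthogonal_to_span[of y "range b" y] assms(2) by auto
  then show ?thesis by (simp add: y_def orthogonal_def)
qed

lemma quadratic_form_orthonormal_eigenbasis: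
  fixes A :: "real^'n^'n" and b :: "'n \<Rightarrow> real^'n"
  assumes orth: "\<And>i j. b i \<bullet> b j = (if i = j then 1 else 0)" and span: "span (range b) = UNIV"
    and eig: "\<And>i. A *v b i = \<mu> i *\<^sub>R b i"
  shows "x \<bullet> (A *v x) = (\<Sum>i\<in>UNIV. \<mu> i * (x \<bullet> b i)\<^sup>2)"
    and "x \<bullet> x = (\<Sum>i\<in>UNIV. (x \<bullet> b i)\<^sup>2)"
proof -
  have x: "x = (\<Sum>i\<in>UNIV. (x \<bullet> b i) *\<^sub>R b i)"
    by (rule orthonormal_basis_expansion[OF orth span])
  have "A *v x = (\<Sum>i\<in>UNIV. (x \<bullet> b i * \<mu> i) *\<^sub>R b i)"
    by (subst x) (simp add: linear_sum[OF matrix_vector_mul_linear] matrix_vector_mult_scaleR eig)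
  then show "x \<bullet> (A *v x) = (\<Sum>i\<in>UNIV. \<mu> i * (x \<bullet> b i)\<^sup>2)"
    by (simp add: inner_sum_right power2_eq_square algebra_simps)
  show "x \<bullet> x = (\<Sum>i\<in>UNIV. (x \<bullet> b i)\<^sup>2)"
    by (subst (2) x) (simp add: inner_sum_right power2_eq_square)
qed

lemma quadratic_form_bounds_on_support:
  fixes A :: "real^'n^'n" and b :: "'n \<Rightarrow> real^'n"
  assumes "\<And>i j. b i \<bullet> b j = (if i = j then 1 else 0)" "span (range b) = UNIV"
    and "\<And>i. A *v b i = \<mu> i *\<^sub>R b i"
  shows "(\<And>i. x \<bullet> b i \<noteq> 0 \<Longrightarrow> \<mu> i \<le> c) \<Longrightarrow> x \<bullet> (A *v x) \<le> c * (x \<bullet> x)"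
    and "(\<And>i. x \<bullet> b i \<noteq> 0 \<Longrightarrow> c \<le> \<mu> i) \<Longrightarrow> c * (x \<bullet> x) \<le> x \<bullet> (A *v x)"
  unfolding quadratic_form_orthonormal_eigenbasis[OF assms] sum_distrib_left
  by (intro sum_mono; metis mult_right_mono mult_zero_right power2_eq_square
      zero_le_power2 order_refl)+

lemma eigenvalue_nonzero_if_det_nonzero:
  fixes A :: "real^'n^'n"
  assumes "det A \<noteq> 0" "A *v v = \<mu> *\<^sub>R v" "v \<noteq> 0"
  shows "\<mu> \<noteq> 0"
proof
  assume "\<mu> = 0"
  have "inj ((*v) A)"
    using det_nz_iff_inj[of "(*v) A"] assms(1) by (simp add: matrix_of_matrix_vector_mul)
  moreover have "A *v v = A *v 0"
    using assms(2) \<open>\<mu> = 0\<close> by simp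
  ultimately show False
    using assms(3) by (meson injD)
qed

lemma inner_eq_0_if_in_span_orthonormal:
  assumes orth: "\<And>i j. b i \<bullet> b j = (if i = j then 1 else 0)"
    and "u \<in> span (b ` N)" "i \<notin> N"
  shows "u \<bullet> b i = 0"
proof -
  have "orthogonal (b i) u"
    using assms(2) by (rule orthogonal_to_span) (use orth assms(3) in \<open>auto simp: orthogonal_def\<close>)
  then show ?thesis
    by (simp add: orthogonal_def inner_commute)
qed

lemma dim_span_orthonormal_image:
  fixes b :: "'i \<Rightarrow> 'a::euclidean_space"
  assumes orth: "\<And>i j. b i \<bullet> b j = (if i = j then 1 else 0)"
  shows "dim (span (b ` N)) = card N"
proof -
  have "inj b"
    by (rule injI) (metis orth zero_neq_one)
  have "pairwise orthogonal (b ` N)"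
    using orth by (auto simp: pairwise_def orthogonal_def)
  moreover have "0 \<notin> b ` N"
    using orth by (metis (no_types, lifting) image_iff inner_zero_left zero_neq_one)
  ultimately have "independent (b ` N)"
    by (rule pairwise_orthogonal_independent)
  then show ?thesis
    using card_image[OF inj_on_subset[OF \<open>inj b\<close> subset_UNIV]]
    by (simp add: dim_eq_card_independent)
qed

lemma norm_matrix_vector_mult_le:
  fixes M :: "real^'n^'m"
  shows "norm (M *v x) \<le> real CARD('m) * real CARD('n) * norm M * norm x"
proof -
  have "\<bar>M $ i $ j\<bar> \<le> norm M" for i j
    using component_le_norm_cart[of "M $ i" j] Finite_Cartesian_Product.norm_nth_le[of M i] by linarith
  then have "onorm ((*v) M) \<le> real CARD('m) * real CARD('n) * norm M"
    by (rule onorm_le_matrix_component)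
  then show ?thesis
    using onorm[OF matrix_vector_mul_bounded_linear, of M x] by (meson mult_right_mono norm_ge_zero order_trans)
qed

lemma quadratic_form_perturbation:
  fixes H :: "'a::metric_space \<Rightarrow> real^'n^'n"
  assumes "isCont H z" "\<epsilon> > 0"
  obtains \<delta> where "\<delta> > 0" "\<And>y x. dist y z < \<delta> \<Longrightarrow> \<bar>x \<bullet> ((H y - H z) *v x)\<bar> \<le> \<epsilon> * (x \<bullet> x)"
proof -
  define K where "K = real CARD('n) * real CARD('n)"
  have "K > 0" by (simp add: K_def)
  then obtain \<delta> where "\<delta> > 0" and \<delta>: "\<And>y. dist y z < \<delta> \<Longrightarrow> dist (H y) (H z) < \<epsilon> / K"
    using assms unfolding continuous_at_eps_delta by (metis divide_pos_pos)
  have "\<bar>x \<bullet> ((H y - H z) *v x)\<bar> \<le> \<epsilon> * (x \<bullet> x)" if "dist y z < \<delta>" for y x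
  proof -
    have "\<bar>x \<bullet> ((H y - H z) *v x)\<bar> \<le> norm x * ((K * norm (H y - H z)) * norm x)"
      using Cauchy_Schwarz_ineq2 norm_matrix_vector_mult_le[of "H y - H z" x]
      by (smt (verit, best) K_def mult_left_mono norm_ge_zero)
    also have "\<dots> \<le> norm x * ((K * (\<epsilon> / K)) * norm x)"
      using \<delta>[OF that] \<open>K > 0\<close>
      by (intro mult_left_mono mult_right_mono) (auto simp: dist_norm)
    also have "\<dots> = \<epsilon> * (x \<bullet> x)"
      using \<open>K > 0\<close> by (simp add: power2_norm_eq_inner[symmetric] power2_eq_square)
    finally show ?thesis .
  qed
  with \<open>\<delta> > 0\<close> show ?thesis using that by blast
qed

lemma nondegenerate_symmetric_matrix_definite_splitting:
  fixes A :: "real^'n^'n"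
  assumes sym: "\<And>x y. (A *v x) \<bullet> y = x \<bullet> (A *v y)" and "det A \<noteq> 0"
  obtains E m where "subspace E" "m > 0" "dim E = num_neg_eigenvalues A"
    "\<And>u. u \<in> E \<Longrightarrow> u \<bullet> (A *v u) \<le> - m * (u \<bullet> u)"
    "\<And>w. w \<in> E\<^sup>\<bottom> \<Longrightarrow> m * (w \<bullet> w) \<le> w \<bullet> (A *v w)"
proof -
  obtain b :: "'n \<Rightarrow> real^'n" and \<mu> where orth: "\<And>i j. b i \<bullet> b j = (if i = j then 1 else 0)"
    and eig: "\<And>i. A *v b i = \<mu> i *\<^sub>R b i" and span: "span (range b) = UNIV"
    by (rule symmetric_matrix_orthonormal_eigenbasis[OF sym], rule that)
  have "\<mu> i \<noteq> 0" for i
  proof (rule eigenvalue_nonzero_if_det_nonzero[OF assms(2) eig])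
    show "b i \<noteq> 0"
      using orth[of i i] by auto
  qed
  define m where "m = Min (range (\<lambda>i. \<bar>\<mu> i\<bar>))"
  have "m > 0" and m_le: "\<And>i. m \<le> \<bar>\<mu> i\<bar>"
    using \<open>\<And>i. \<mu> i \<noteq> 0\<close> by (auto simp: m_def)
  define E where "E = span (b ` {i. \<mu> i < 0})"
  have neg: "u \<bullet> (A *v u) \<le> - m * (u \<bullet> u)" if "u \<in> E" for u
  proof (rule quadratic_form_bounds_on_support(1)[OF orth span eig])
    fix i assume "u \<bullet> b i \<noteq> 0"
    then have "\<mu> i < 0"
      using inner_eq_0_if_in_span_orthonormal[OF orth, of u "{i. \<mu> i < 0}" i] \<open>u \<in> E\<close>
      by (auto simp: E_def)
    then show "\<mu> i \<le> - m"
      using m_le[of i] by auto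
  qed
  have pos: "m * (w \<bullet> w) \<le> w \<bullet> (A *v w)" if "w \<in> E\<^sup>\<bottom>" for w
  proof (rule quadratic_form_bounds_on_support(2)[OF orth span eig])
    fix i assume "w \<bullet> b i \<noteq> 0"
    then have "\<not> \<mu> i < 0"
      using \<open>w \<in> E\<^sup>\<bottom>\<close> span_base[of "b i" "b ` {i. \<mu> i < 0}"]
      by (auto simp: E_def orthogonal_comp_def orthogonal_def inner_commute)
    then show "m \<le> \<mu> i"
      using m_le[of i] \<open>\<mu> i \<noteq> 0\<close> by auto
  qed
  have "dim E = num_neg_eigenvalues A"
    unfolding E_def dim_span_orthonormal_image[OF orth]
    by (rule num_neg_eigenvalues_orthonormal_eigenbasis[OF orth eig, symmetric])
  moreover have "subspace E"
    by (simp add: E_def)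
  ultimately show ?thesis
    using that[OF _ \<open>m > 0\<close> _ neg pos] by blast
qed

section \<open>Communication height and path connectivity\<close>

lemma bdd_above_path_values:
  fixes V :: "'a::real_normed_vector \<Rightarrow> real"
  assumes cV: "continuous_on UNIV V" and p: "path \<gamma>"
  shows "bdd_above ((\<lambda>t. V (\<gamma> t)) ` {0..1})"
proof -
  have "continuous_on {0..1} (V \<circ> \<gamma>)"
    using p cV unfolding path_def by (intro continuous_on_compose) (auto intro: continuous_on_subset)
  then have "compact ((V \<circ> \<gamma>) ` {0..1})" by (intro compact_continuous_image) auto
  then show ?thesis by (simp add: bounded_imp_bdd_above compact_imp_bounded image_comp)
qed

lemma pathfinish_value_le_Sup:
  fixes V :: "'a::real_normed_vector \<Rightarrow> real"
  assumes "continuous_on UNIV V" "path \<gamma>"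
  shows "V (pathfinish \<gamma>) \<le> (SUP t\<in>{0..1}. V (\<gamma> t))"
  unfolding pathfinish_def by (rule cSUP_upper[OF _ bdd_above_path_values[OF assms]]) auto

lemma comm_height_ge_endpoint:
  fixes V :: "'a::real_normed_vector \<Rightarrow> real"
  assumes "continuous_on UNIV V"
  shows "V x \<le> comm_height V y x"
  unfolding comm_height_def
proof (rule cINF_greatest)
  have "linepath y x \<in> {\<gamma>. path \<gamma> \<and> pathstart \<gamma> = y \<and> pathfinish \<gamma> = x}"
    by simp
  then show "{\<gamma>. path \<gamma> \<and> pathstart \<gamma> = y \<and> pathfinish \<gamma> = x} \<noteq> {}"
    by blast
qed (use pathfinish_value_le_Sup[OF assms] in auto)

lemma comm_height_le_path:
  fixes V :: "'a::real_normed_vector \<Rightarrow> real"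
  assumes V: "continuous_on UNIV V" and \<gamma>: "path \<gamma>" "pathstart \<gamma> = y" "pathfinish \<gamma> = x"
    and le: "\<And>p. p \<in> path_image \<gamma> \<Longrightarrow> V p \<le> c"
  shows "comm_height V y x \<le> c"
proof -
  let ?S = "\<lambda>\<gamma>. SUP t\<in>{0..1}. V (\<gamma> t)"
  have "bdd_below (?S ` {\<gamma>. path \<gamma> \<and> pathstart \<gamma> = y \<and> pathfinish \<gamma> = x})"
    using pathfinish_value_le_Sup[OF V] by (intro bdd_belowI[of _ "V x"]) auto
  then have "comm_height V y x \<le> ?S \<gamma>"
    unfolding comm_height_def by (rule cINF_lower) (use \<gamma> in auto)
  also have "?S \<gamma> \<le> c"
    by (rule cSUP_least) (auto intro!: le simp: path_image_def)
  finally show ?thesis .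
qed

lemma path_connected_if_connected_to_subset:
  assumes "path_connected C" "C \<subseteq> S" "\<And>x. x \<in> S \<Longrightarrow> \<exists>c\<in>C. path_component S x c"
  shows "path_connected S"
  unfolding path_connected_component
proof (intro ballI)
  fix x y assume "x \<in> S" "y \<in> S"
  then obtain cx cy where "cx \<in> C" "cy \<in> C" "path_component S x cx" "path_component S y cy"
    using assms(3) by blast
  moreover have "path_component S cx cy"
    using assms(1,2) \<open>cx \<in> C\<close> \<open>cy \<in> C\<close> path_component_of_subset path_connected_component by blast
  ultimately show "path_component S x y"
    by (meson path_component_sym path_component_trans)
qed

lemma path_first_arrival:
  fixes z :: "'a::t1_space"
  assumes "path \<gamma>" "pathstart \<gamma> \<noteq> z" "pathfinish \<gamma> = z"
  obtains t1 where "0 < t1" "t1 \<le> 1" "\<gamma> t1 = z" "\<And>t. 0 \<le> t \<Longrightarrow> t < t1 \<Longrightarrow> \<gamma> t \<noteq> z"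
proof -
  define K where "K = {0..1} \<inter> \<gamma> -` {z}"
  have "closed K"
    unfolding K_def using assms(1) by (intro continuous_closed_preimage) (auto simp: path_def)
  moreover have "1 \<in> K" and bK: "bdd_below K"
    using assms(3) by (auto simp: K_def pathfinish_def intro: bdd_belowI[of _ 0])
  ultimately have "Inf K \<in> K"
    using closed_contains_Inf by blast
  then have t1: "0 \<le> Inf K" "\<gamma> (Inf K) = z"
    by (auto simp: K_def)
  have "Inf K \<le> 1"
    using cInf_lower[OF \<open>1 \<in> K\<close> bK] .
  have avoid: "\<gamma> t \<noteq> z" if "0 \<le> t" "t < Inf K" for t
  proof
    assume "\<gamma> t = z"
    then have "t \<in> K"
      using that \<open>Inf K \<le> 1\<close> by (auto simp: K_def)
    with that show False
      using cInf_lower[OF _ bK, of t] by linarith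
  qed
  have "Inf K \<noteq> 0"
    using t1(2) assms(2) by (auto simp: pathstart_def)
  with t1(1) have "0 < Inf K"
    by linarith
  then show ?thesis
    using that[OF _ \<open>Inf K \<le> 1\<close> t1(2) avoid] by blast
qed

lemma path_component_minus_point_near:
  fixes z :: "'a::real_normed_vector"
  assumes S: "path_connected S" "z \<in> S" "a \<in> S" "a \<noteq> z" and "r > 0"
  obtains p where "dist p z < r" "path_component (S - {z}) a p"
proof -
  obtain \<gamma> where \<gamma>: "path \<gamma>" "path_image \<gamma> \<subseteq> S" "pathstart \<gamma> = a" "pathfinish \<gamma> = z"
    using S unfolding path_connected_def by blast
  then obtain t1 where t1: "0 < t1" "t1 \<le> 1" "\<gamma> t1 = z" and avoid: "\<And>t. 0 \<le> t \<Longrightarrow> t < t1 \<Longrightarrow> \<gamma> t \<noteq> z"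
    using path_first_arrival[OF \<gamma>(1)] \<gamma>(3,4) \<open>a \<noteq> z\<close> by blast
  obtain d where "d > 0" and d: "\<And>t. t \<in> {0..1} \<Longrightarrow> dist t t1 < d \<Longrightarrow> dist (\<gamma> t) (\<gamma> t1) < r"
    using \<gamma>(1) t1 \<open>r > 0\<close> unfolding path_def continuous_on_iff by (meson atLeastAtMost_iff less_imp_le)
  define t2 where "t2 = max 0 (t1 - d / 2)"
  have t2: "0 \<le> t2" "t2 < t1" "dist t2 t1 < d"
    using \<open>t1 > 0\<close> \<open>d > 0\<close> by (auto simp: t2_def dist_real_def)
  have "path_image (subpath 0 t2 \<gamma>) \<subseteq> S - {z}"
  proof
    fix q assume "q \<in> path_image (subpath 0 t2 \<gamma>)"
    then obtain t where "0 \<le> t" "t \<le> t2" "q = \<gamma> t"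
      using t2 by (auto simp: path_image_subpath)
    then show "q \<in> S - {z}"
      using \<gamma>(2) avoid t1 t2 by (auto simp: path_image_def)
  qed
  moreover have "path (subpath 0 t2 \<gamma>)"
    using \<gamma>(1) t1 t2 by simp
  ultimately have "path_component (S - {z}) a (\<gamma> t2)"
    unfolding path_component_def using \<gamma>(3) by (metis pathfinish_subpath pathstart_def pathstart_subpath)
  moreover have "dist (\<gamma> t2) z < r"
    using d[of t2] t1 t2 by auto
  ultimately show ?thesis using that by blast
qed

section \<open>Near a nondegenerate critical point\<close>

text \<open>\<open>E\<close> plays the role of the negative eigenspace of the Hessian at \<open>z\<close>.\<close>

locale morse_chart =
  fixes V :: "real^'n \<Rightarrow> real" and g :: "real^'n \<Rightarrow> real^'n" and H :: "real^'n \<Rightarrow> real^'n^'n"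
    and z :: "real^'n" and E :: "(real^'n) set" and \<delta> :: real
  assumes V_deriv: "\<And>x. (V has_derivative (\<lambda>h. g x \<bullet> h)) (at x)"
    and g_deriv: "\<And>x. (g has_derivative (\<lambda>h. H x *v h)) (at x)"
    and critical: "g z = 0"
    and subspace_E: "subspace E"
    and radius_pos: "\<delta> > 0"
    and hessian_neg: "\<And>y u. dist y z < \<delta> \<Longrightarrow> u \<in> E \<Longrightarrow> u \<noteq> 0 \<Longrightarrow> u \<bullet> (H y *v u) < 0"
    and hessian_pos: "\<And>y w. dist y z < \<delta> \<Longrightarrow> w \<in> E\<^sup>\<bottom> \<Longrightarrow> w \<noteq> 0 \<Longrightarrow> w \<bullet> (H y *v w) > 0"
begin

definition sublevel_ball :: "real \<Rightarrow> (real^'n) set" where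
  "sublevel_ball r = {x \<in> ball z r. V x < V z}"

lemma continuous_V: "continuous_on UNIV V"
  using V_deriv by (meson continuous_at_imp_continuous_on has_derivative_continuous)

lemma orthogonal_decomposition:
  obtains u w where "x = u + w" "u \<in> E" "w \<in> E\<^sup>\<bottom>"
  using subspace_sum_orthogonal_comp[OF subspace_E] set_plus_elim by (metis UNIV_I)

lemma norm_add_orthogonal_le:
  assumes "u \<in> E" "w \<in> E\<^sup>\<bottom>" "\<bar>s\<bar> \<le> 1"
  shows "norm (u + s *\<^sub>R w) \<le> norm (u + w)"
proof -
  have orth: "orthogonal u (c *\<^sub>R w)" for c
    using assms(1,2) by (auto simp: orthogonal_comp_def orthogonal_clauses)
  have "(norm (u + s *\<^sub>R w))\<^sup>2 = (norm u)\<^sup>2 + s\<^sup>2 * (norm w)\<^sup>2"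
    using norm_add_Pythagorean[OF orth[of s]] by (simp add: power_mult_distrib)
  also have "\<dots> \<le> (norm u)\<^sup>2 + (norm w)\<^sup>2"
    using assms(3) mult_left_le_one_le[of "(norm w)\<^sup>2" "s\<^sup>2"] by (simp add: abs_square_le_1)
  also have "\<dots> = (norm (u + w))\<^sup>2"
    using norm_add_Pythagorean[OF orth[of 1]] by simp
  finally show ?thesis
    using power2_le_imp_le by fastforce
qed

lemma V_lt_along_E:
  assumes "u \<in> E" "u \<noteq> 0" "norm u < \<delta>"
  shows "V (z + u) < V z"
proof -
  have "- V (z + 0 *\<^sub>R u) < - V (z + 1 *\<^sub>R u)"
  proof (rule less_if_second_derivative_pos[of "\<lambda>t. - V (z + t *\<^sub>R u)"
        "\<lambda>t. - (g (z + t *\<^sub>R u) \<bullet> u)" "\<lambda>t. - ((H (z + t *\<^sub>R u) *v u) \<bullet> u)"])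
    show "((\<lambda>t. - V (z + t *\<^sub>R u)) has_real_derivative - (g (z + t *\<^sub>R u) \<bullet> u)) (at t)" for t
      by (intro DERIV_minus has_real_derivative_along_line V_deriv)
    show "((\<lambda>t. - (g (z + t *\<^sub>R u) \<bullet> u)) has_real_derivative - ((H (z + t *\<^sub>R u) *v u) \<bullet> u)) (at t)" for t
      by (intro DERIV_minus has_real_derivative_gradient_along_line g_deriv)
    show "- ((H (z + t *\<^sub>R u) *v u) \<bullet> u) > 0" if "0 < t" "t < 1" for t
    proof -
      have "dist (z + t *\<^sub>R u) z < \<delta>"
        using that assms(3) mult_left_le_one_le[of "norm u" t] by (simp add: dist_norm)
      then show ?thesis
        using hessian_neg assms(1,2) by (simp add: inner_commute)
    qed
  qed (simp add: critical)
  then show ?thesis by simp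
qed

lemma V_gt_along_orthogonal:
  assumes "w \<in> E\<^sup>\<bottom>" "w \<noteq> 0" "norm w < \<delta>"
  shows "V z < V (z + w)"
proof -
  have "V (z + 0 *\<^sub>R w) < V (z + 1 *\<^sub>R w)"
  proof (rule less_if_second_derivative_pos[of "\<lambda>t. V (z + t *\<^sub>R w)"
        "\<lambda>t. g (z + t *\<^sub>R w) \<bullet> w" "\<lambda>t. (H (z + t *\<^sub>R w) *v w) \<bullet> w"])
    show "((\<lambda>t. V (z + t *\<^sub>R w)) has_real_derivative g (z + t *\<^sub>R w) \<bullet> w) (at t)" for t
      by (intro has_real_derivative_along_line V_deriv)
    show "((\<lambda>t. g (z + t *\<^sub>R w) \<bullet> w) has_real_derivative (H (z + t *\<^sub>R w) *v w) \<bullet> w) (at t)" for t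
      by (intro has_real_derivative_gradient_along_line g_deriv)
    show "(H (z + t *\<^sub>R w) *v w) \<bullet> w > 0" if "0 < t" "t < 1" for t
    proof -
      have "dist (z + t *\<^sub>R w) z < \<delta>"
        using that assms(3) mult_left_le_one_le[of "norm w" t] by (simp add: dist_norm)
      then show ?thesis
        using hessian_pos assms(1,2) by (simp add: inner_commute)
    qed
  qed (simp add: critical)
  then show ?thesis by simp
qed

lemma add_E_mem_sublevel_ball:
  assumes "r \<le> \<delta>" "u \<in> E" "u \<noteq> 0" "norm u < r"
  shows "z + u \<in> sublevel_ball r"
  using V_lt_along_E[OF assms(2,3)] assms(1,4) by (simp add: sublevel_ball_def dist_norm)

lemma V_le_max_along_orthogonal:
  assumes "u \<in> E" "w \<in> E\<^sup>\<bottom>" "norm (u + w) < \<delta>" "0 \<le> s" "s \<le> 1"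
  shows "V (z + u + s *\<^sub>R w) \<le> max (V (z + u)) (V (z + u + w))"
proof -
  define f where "f t = V ((z + u) + t *\<^sub>R w)" for t
  have "convex_on {0..1} f"
  proof (rule f''_ge0_imp_convex[of _ _ "\<lambda>t. g ((z + u) + t *\<^sub>R w) \<bullet> w"
        "\<lambda>t. (H ((z + u) + t *\<^sub>R w) *v w) \<bullet> w"])
    fix t :: real assume t: "t \<in> {0..1}"
    show "(f has_real_derivative g ((z + u) + t *\<^sub>R w) \<bullet> w) (at t)"
      unfolding f_def by (rule has_real_derivative_along_line[OF V_deriv])
    show "((\<lambda>t. g ((z + u) + t *\<^sub>R w) \<bullet> w) has_real_derivative (H ((z + u) + t *\<^sub>R w) *v w) \<bullet> w) (at t)"
      by (rule has_real_derivative_gradient_along_line[OF g_deriv])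
    have "dist (z + u + t *\<^sub>R w) z < \<delta>"
      using norm_add_orthogonal_le[OF assms(1,2), of t] t assms(3) by (simp add: dist_norm add.assoc)
    then show "(H ((z + u) + t *\<^sub>R w) *v w) \<bullet> w \<ge> 0"
      using hessian_pos[OF _ assms(2)] by (cases "w = 0") (auto simp: inner_commute less_imp_le)
  qed simp
  then have "f ((1 - s) *\<^sub>R 0 + s *\<^sub>R 1) \<le> (1 - s) * f 0 + s * f 1"
    using assms(4,5) by (intro convex_onD) auto
  also have "\<dots> \<le> (1 - s) * max (f 0) (f 1) + s * max (f 0) (f 1)"
    using assms(4,5) by (intro add_mono mult_left_mono) auto
  finally show ?thesis by (simp add: f_def algebra_simps)
qed

lemma descent_direction:
  assumes "r \<le> \<delta>" "x \<in> sublevel_ball r"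
  obtains u where "u \<in> E" "u \<noteq> 0" "norm u < r" "closed_segment x (z + u) \<subseteq> sublevel_ball r"
proof -
  obtain u w where uw: "x - z = u + w" "u \<in> E" "w \<in> E\<^sup>\<bottom>"
    by (rule orthogonal_decomposition)
  have x: "x = z + u + w"
    using uw(1) by (simp add: algebra_simps)
  have Vx: "V x < V z" and nx: "norm (u + w) < r"
    using assms(2) uw(1) by (auto simp: sublevel_ball_def dist_norm norm_minus_commute)
  have nu: "norm u < r"
    using norm_add_orthogonal_le[OF uw(2,3), of 0] nx by simp
  have "u \<noteq> 0"
  proof
    assume "u = 0"
    with Vx x have "w \<noteq> 0" by auto
    with \<open>u = 0\<close> have "V z < V x"
      using V_gt_along_orthogonal[OF uw(3)] x nx assms(1) by simp
    with Vx show False by simp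
  qed
  have Vu: "V (z + u) < V z"
    using V_lt_along_E[OF uw(2) \<open>u \<noteq> 0\<close>] nu assms(1) by simp
  have "closed_segment x (z + u) \<subseteq> sublevel_ball r"
  proof
    fix p assume "p \<in> closed_segment x (z + u)"
    then obtain t where t: "0 \<le> t" "t \<le> 1" and "p = (1 - t) *\<^sub>R x + t *\<^sub>R (z + u)"
      by (auto simp: closed_segment_def)
    then have p: "p = z + u + (1 - t) *\<^sub>R w"
      by (simp add: x algebra_simps)
    have "norm (u + (1 - t) *\<^sub>R w) < r"
      using norm_add_orthogonal_le[OF uw(2,3), of "1 - t"] t nx by simp
    moreover have "V p < V z"
      using V_le_max_along_orthogonal[OF uw(2,3), of "1 - t"] nx assms(1) t Vu Vx x p by simp
    ultimately show "p \<in> sublevel_ball r"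
      by (simp add: sublevel_ball_def p dist_norm norm_minus_commute add.assoc)
  qed
  then show ?thesis
    using that uw(2) \<open>u \<noteq> 0\<close> nu by blast
qed

lemma segment_to_centre_subset:
  assumes "r \<le> \<delta>" "u \<in> E" "norm u < r"
  shows "closed_segment (z + u) z \<subseteq> insert z (sublevel_ball r)"
proof
  fix p assume "p \<in> closed_segment (z + u) z"
  then obtain t where t: "0 \<le> t" "t \<le> 1" and "p = (1 - t) *\<^sub>R (z + u) + t *\<^sub>R z"
    by (auto simp: closed_segment_def)
  then have p: "p = z + (1 - t) *\<^sub>R u"
    by (simp add: algebra_simps)
  have "norm ((1 - t) *\<^sub>R u) < r"
    using t assms(3) mult_left_le_one_le[of "norm u" "1 - t"] by simp
  moreover have "(1 - t) *\<^sub>R u \<in> E"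
    using assms(2) subspace_E by (simp add: subspace_scale)
  ultimately show "p \<in> insert z (sublevel_ball r)"
    using add_E_mem_sublevel_ball[OF assms(1)] p by (cases "(1 - t) *\<^sub>R u = 0") auto
qed

lemma descent_path:
  assumes "r \<le> \<delta>" "x \<in> sublevel_ball r"
  obtains \<gamma> where "path \<gamma>" "pathstart \<gamma> = x" "pathfinish \<gamma> = z"
    "path_image \<gamma> \<subseteq> insert z (sublevel_ball r)"
proof -
  obtain u where u: "u \<in> E" "norm u < r" "closed_segment x (z + u) \<subseteq> sublevel_ball r"
    using descent_direction[OF assms] by blast
  show ?thesis
  proof (rule that[of "linepath x (z + u) +++ linepath (z + u) z"])
    show "path_image (linepath x (z + u) +++ linepath (z + u) z) \<subseteq> insert z (sublevel_ball r)"
      using u segment_to_centre_subset[OF assms(1) u(1,2)] by (auto simp: path_image_join)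
  qed auto
qed

lemma sublevel_ball_subset_open_valley:
  assumes "r \<le> \<delta>"
  shows "sublevel_ball r \<subseteq> open_valley V z"
proof
  fix x assume x: "x \<in> sublevel_ball r"
  obtain \<gamma> where \<gamma>: "path \<gamma>" "pathstart \<gamma> = x" "pathfinish \<gamma> = z"
    "path_image \<gamma> \<subseteq> insert z (sublevel_ball r)"
    using descent_path[OF assms x] by blast
  have "comm_height V x z \<le> V z"
    using \<gamma>(4) by (intro comm_height_le_path[OF continuous_V \<gamma>(1-3)])
      (auto simp: sublevel_ball_def less_imp_le)
  moreover have "V z \<le> comm_height V x z"
    by (rule comm_height_ge_endpoint[OF continuous_V])
  ultimately show "x \<in> open_valley V z"
    using x by (simp add: open_valley_def closed_valley_def sublevel_ball_def)
qed

lemma open_valley_Int_ball: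
  assumes "r \<le> \<delta>"
  shows "open_valley V z \<inter> ball z r = sublevel_ball r"
  using sublevel_ball_subset_open_valley[OF assms]
  by (auto simp: sublevel_ball_def open_valley_def)

lemma path_connected_insert_sublevel_ball:
  assumes "r \<le> \<delta>"
  shows "path_connected (insert z (sublevel_ball r))"
proof (rule path_connected_if_connected_to_subset[of "{z}"])
  fix x assume x: "x \<in> insert z (sublevel_ball r)"
  show "\<exists>c\<in>{z}. path_component (insert z (sublevel_ball r)) x c"
  proof (cases "x = z")
    case True
    then show ?thesis by (simp add: path_component_refl)
  next
    case False
    then obtain \<gamma> where "path \<gamma>" "pathstart \<gamma> = x" "pathfinish \<gamma> = z"
      "path_image \<gamma> \<subseteq> insert z (sublevel_ball r)"
      using descent_path[OF assms] x by blast
    then show ?thesis by (auto simp: path_component_def)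
  qed
qed auto

lemma not_saddle_if_sublevel_balls_path_connected:
  assumes "\<And>r. 0 < r \<Longrightarrow> r \<le> \<delta> \<Longrightarrow> path_connected (sublevel_ball r)"
  shows "\<not> is_saddle V z"
proof
  assume "is_saddle V z"
  then obtain \<eta> where "\<eta> > 0" and not_pc: "\<not> path_connected (open_valley V z \<inter> ball z \<eta>)"
    and pc: "path_connected ((open_valley V z \<union> {z}) \<inter> ball z \<eta>)"
    unfolding is_saddle_def by blast
  define r where "r = min \<delta> \<eta>"
  have r: "0 < r" "r \<le> \<delta>" "r \<le> \<eta>"
    using radius_pos \<open>\<eta> > 0\<close> by (auto simp: r_def)
  define S where "S = (open_valley V z \<union> {z}) \<inter> ball z \<eta>"
  define T where "T = open_valley V z \<inter> ball z \<eta>"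
  have T: "T = S - {z}"
    by (auto simp: S_def T_def open_valley_def)
  have "z \<in> S"
    using \<open>\<eta> > 0\<close> by (simp add: S_def)
  have "sublevel_ball r \<subseteq> T"
    using sublevel_ball_subset_open_valley[OF r(2)] r(3) by (auto simp: T_def sublevel_ball_def)
  \<comment> \<open>A path in \<open>T \<union> {z}\<close> from \<open>a\<close> to \<open>z\<close>, stopped just before \<open>z\<close>, ends in the sublevel ball.\<close>
  moreover have "\<exists>p\<in>sublevel_ball r. path_component T a p" if "a \<in> T" for a
  proof -
    have "a \<in> S" "a \<noteq> z"
      using that by (auto simp: T)
    then obtain p where "dist p z < r" and "path_component (S - {z}) a p"
      using path_component_minus_point_near[OF pc[folded S_def] \<open>z \<in> S\<close>] r(1) by metis
    then have p: "path_component T a p"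
      by (simp add: T)
    then have "p \<in> open_valley V z \<inter> ball z r"
      using path_component_mem(2)[OF p] \<open>dist p z < r\<close> by (simp add: T_def dist_commute)
    then have "p \<in> sublevel_ball r"
      using open_valley_Int_ball[OF r(2)] by simp
    with p show ?thesis by blast
  qed
  ultimately have "path_connected T"
    by (rule path_connected_if_connected_to_subset[OF assms[OF r(1,2)]])
  with not_pc show False
    by (simp add: T_def)
qed

lemma not_saddle_if_dim_0:
  assumes "dim E = 0"
  shows "\<not> is_saddle V z"
proof (rule not_saddle_if_sublevel_balls_path_connected)
  fix r assume "r \<le> \<delta>"
  have "E\<^sup>\<bottom> = UNIV"
    using assms by (auto simp: orthogonal_comp_def orthogonal_def)
  have "V z < V x" if "x \<in> ball z r" "x \<noteq> z" for x
    using V_gt_along_orthogonal[of "x - z"] \<open>E\<^sup>\<bottom> = UNIV\<close> that \<open>r \<le> \<delta>\<close>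
    by (simp add: dist_norm norm_minus_commute)
  then have "sublevel_ball r = {}"
    by (force simp: sublevel_ball_def)
  then show "path_connected (sublevel_ball r)" by simp
qed

lemma not_saddle_if_dim_ge_2:
  assumes "dim E \<ge> 2"
  shows "\<not> is_saddle V z"
proof (rule not_saddle_if_sublevel_balls_path_connected)
  fix r assume "0 < r" "r \<le> \<delta>"
  define C where "C = (+) z ` (E \<inter> ball 0 r) - {z}"
  have "0 \<in> E \<inter> ball 0 r"
    using subspace_E \<open>0 < r\<close> by (simp add: subspace_0)
  then have "aff_dim (E \<inter> ball 0 r) = aff_dim E"
    using subspace_E by (intro aff_dim_convex_Int_open subspace_imp_convex) auto
  then have "aff_dim ((+) z ` (E \<inter> ball 0 r)) \<noteq> 1"
    using assms aff_dim_subspace[OF subspace_E] by (simp add: aff_dim_translation_eq)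
  then have "path_connected C"
    unfolding C_def using subspace_E
    by (intro path_connected_punctured_convex convex_translation convex_Int subspace_imp_convex convex_ball)
  moreover have "C \<subseteq> sublevel_ball r"
  proof
    fix p assume "p \<in> C"
    then obtain u where "u \<in> E" "norm u < r" "p = z + u" "p \<noteq> z"
      by (auto simp: C_def)
    then show "p \<in> sublevel_ball r"
      using add_E_mem_sublevel_ball[OF \<open>r \<le> \<delta>\<close>, of u] by auto
  qed
  moreover have "\<exists>c\<in>C. path_component (sublevel_ball r) x c" if x: "x \<in> sublevel_ball r" for x
  proof -
    obtain u where u: "u \<in> E" "u \<noteq> 0" "norm u < r" "closed_segment x (z + u) \<subseteq> sublevel_ball r"
      using descent_direction[OF \<open>r \<le> \<delta>\<close> x] by blast
    then have "path_component (sublevel_ball r) x (z + u)"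
      unfolding path_component_def by (intro exI[of _ "linepath x (z + u)"]) auto
    moreover have "z + u \<in> C"
      using u by (auto simp: C_def)
    ultimately show ?thesis by blast
  qed
  ultimately show "path_connected (sublevel_ball r)"
    by (rule path_connected_if_connected_to_subset)
qed

lemma inner_ne_0_on_sublevel_ball:
  assumes "E = span {e}" "p \<in> sublevel_ball \<delta>"
  shows "(p - z) \<bullet> e \<noteq> 0"
proof
  assume "(p - z) \<bullet> e = 0"
  then have "p - z \<in> E\<^sup>\<bottom>"
    using orthogonal_to_span[of _ "{e}" "p - z"]
    by (auto simp: assms(1) orthogonal_comp_def orthogonal_def inner_commute)
  moreover have "p - z \<noteq> 0" and "norm (p - z) < \<delta>"
    using assms(2) by (auto simp: sublevel_ball_def dist_norm norm_minus_commute)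
  ultimately have "V z < V p"
    using V_gt_along_orthogonal[of "p - z"] by simp
  with assms(2) show False
    by (simp add: sublevel_ball_def)
qed

lemma sublevel_ball_not_path_connected_if_dim_1:
  assumes "dim E = 1"
  shows "sublevel_ball \<delta> \<noteq> {}" "\<not> path_connected (sublevel_ball \<delta>)"
proof -
  have "\<not> E \<subseteq> {0}"
    using assms dim_eq_0[of E] by (metis one_neq_zero)
  then obtain e where "e \<in> E" "e \<noteq> 0"
    by blast
  then have E: "E = span {e}"
    using assms subspace_E by (intro subspace_dim_equal[symmetric]) (auto simp: span_minimal)
  define u where "u = (\<delta> / (2 * norm e)) *\<^sub>R e"
  have "u \<in> E" "- u \<in> E" "u \<noteq> 0" "norm u < \<delta>"
    using \<open>e \<in> E\<close> \<open>e \<noteq> 0\<close> subspace_E radius_pos by (auto simp: u_def subspace_scale subspace_neg)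
  then have u_in: "z + u \<in> sublevel_ball \<delta>" "z - u \<in> sublevel_ball \<delta>"
    using add_E_mem_sublevel_ball[of \<delta> u] add_E_mem_sublevel_ball[of \<delta> "- u"] by auto
  then show "sublevel_ball \<delta> \<noteq> {}"
    by blast
  have "u \<bullet> e > 0"
    using \<open>e \<noteq> 0\<close> radius_pos by (simp add: u_def)
  \<comment> \<open>Every path from \<open>z + u\<close> to \<open>z - u\<close> crosses the hyperplane \<open>z + E\<^sup>\<bottom>\<close>, where \<open>V \<ge> V z\<close>.\<close>
  show "\<not> path_connected (sublevel_ball \<delta>)"
  proof
    assume "path_connected (sublevel_ball \<delta>)"
    then obtain \<gamma> where \<gamma>: "path \<gamma>" "path_image \<gamma> \<subseteq> sublevel_ball \<delta>"
      "pathstart \<gamma> = z + u" "pathfinish \<gamma> = z - u"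
      using u_in unfolding path_connected_def by blast
    define f where "f t = (\<gamma> t - z) \<bullet> e" for t
    have "continuous_on {0..1} f"
      using \<gamma>(1) unfolding f_def path_def by (intro continuous_intros) auto
    moreover have "f 0 \<ge> 0" "f 1 \<le> 0"
      using \<gamma>(3,4) \<open>u \<bullet> e > 0\<close> by (simp_all add: f_def pathstart_def pathfinish_def)
    ultimately obtain t where "0 \<le> t" "t \<le> 1" "f t = 0"
      using IVT2'[of f 1 0 0] by auto
    moreover have "\<gamma> t \<in> sublevel_ball \<delta>" if "0 \<le> t" "t \<le> 1"
      using \<gamma>(2) that by (auto simp: path_image_def)
    ultimately show False
      using inner_ne_0_on_sublevel_ball[OF E] by (auto simp: f_def)
  qed
qed

lemma saddle_if_dim_1:
  assumes "dim E = 1"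
  shows "is_saddle V z"
  unfolding is_saddle_def
proof (intro exI[of _ \<delta>] conjI radius_pos)
  have "(open_valley V z \<union> {z}) \<inter> ball z \<delta> = insert z (sublevel_ball \<delta>)"
    using open_valley_Int_ball[of \<delta>] radius_pos by auto
  then show "path_connected ((open_valley V z \<union> {z}) \<inter> ball z \<delta>)"
    by (simp add: path_connected_insert_sublevel_ball)
qed (use sublevel_ball_not_path_connected_if_dim_1[OF assms] in \<open>simp_all add: open_valley_Int_ball\<close>)

end

lemma morse_chart_exists:
  fixes V :: "real^'n \<Rightarrow> real"
  assumes "C2_with V g H" "g z = 0" "det (H z) \<noteq> 0"
  obtains E \<delta> where "morse_chart V g H z E \<delta>" "dim E = num_neg_eigenvalues (H z)"
proof -
  have V_deriv: "\<And>x. (V has_derivative (\<lambda>h. g x \<bullet> h)) (at x)"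
    and g_deriv: "\<And>x. (g has_derivative (\<lambda>h. H x *v h)) (at x)"
    and "continuous_on UNIV H"
    using assms(1) by (auto simp: C2_with_def)
  have sym: "(H z *v x) \<bullet> y = x \<bullet> (H z *v y)" for x y
    using derivative_of_gradient_symmetric[OF V_deriv g_deriv[of z], where k = x and h = y]
    by (simp add: inner_commute)
  obtain E m where "subspace E" "m > 0" and dim: "dim E = num_neg_eigenvalues (H z)"
    and neg: "\<And>u. u \<in> E \<Longrightarrow> u \<bullet> (H z *v u) \<le> - m * (u \<bullet> u)"
    and pos: "\<And>w. w \<in> E\<^sup>\<bottom> \<Longrightarrow> m * (w \<bullet> w) \<le> w \<bullet> (H z *v w)"
    by (rule nondegenerate_symmetric_matrix_definite_splitting[OF sym assms(3)], rule that)
  have "isCont H z"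
    using \<open>continuous_on UNIV H\<close> by (simp add: continuous_on_eq_continuous_at)
  then obtain \<delta> where "\<delta> > 0"
    and \<delta>: "\<And>y x. dist y z < \<delta> \<Longrightarrow> \<bar>x \<bullet> ((H y - H z) *v x)\<bar> \<le> m / 2 * (x \<bullet> x)"
    using quadratic_form_perturbation half_gt_zero[OF \<open>m > 0\<close>] by blast
  have split: "x \<bullet> (H y *v x) = x \<bullet> (H z *v x) + x \<bullet> ((H y - H z) *v x)" for x y
    by (simp add: matrix_vector_mult_diff_rdistrib inner_diff_right)
  have "morse_chart V g H z E \<delta>"
  proof (rule morse_chart.intro[OF V_deriv g_deriv assms(2) \<open>subspace E\<close> \<open>\<delta> > 0\<close>])
    fix y u assume "dist y z < \<delta>" "u \<in> E" "u \<noteq> 0"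
    then show "u \<bullet> (H y *v u) < 0"
      using split[of u y] \<delta>[of y u] neg[of u] mult_pos_pos[OF \<open>m > 0\<close>, of "u \<bullet> u"]
      by (simp add: abs_le_iff)
  next
    fix y w assume "dist y z < \<delta>" "w \<in> E\<^sup>\<bottom>" "w \<noteq> 0"
    then show "w \<bullet> (H y *v w) > 0"
      using split[of w y] \<delta>[of y w] pos[of w] mult_pos_pos[OF \<open>m > 0\<close>, of "w \<bullet> w"]
      by (simp add: abs_le_iff)
  qed
  then show ?thesis
    using dim by (rule that)
qed

theorem proposition2p7:
  fixes V :: "real^'n \<Rightarrow> real" and g :: "real^'n \<Rightarrow> real^'n"
    and H :: "real^'n \<Rightarrow> real^'n^'n" and z :: "real^'n"
  assumes "bdd_below (range V)" and "tight_levels V"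
    and "C2_with V g H"
    and "g z = 0" and "det (H z) \<noteq> 0"
  shows "is_saddle V z \<longleftrightarrow> num_neg_eigenvalues (H z) = 1"
proof -
  obtain E \<delta> where chart: "morse_chart V g H z E \<delta>" and dim: "dim E = num_neg_eigenvalues (H z)"
    using morse_chart_exists assms(3-5) by blast
  interpret morse_chart V g H z E \<delta>
    by (rule chart)
  consider "dim E = 0" | "dim E = 1" | "dim E \<ge> 2"
    by linarith
  then show ?thesis
    by cases (use dim not_saddle_if_dim_0 saddle_if_dim_1 not_saddle_if_dim_ge_2 in auto)
qed

end
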